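(* Let $f:\mathbb D\to\mathbb C^3$ be holomorphic with $f(\mathbb D)\subset\partial\mathbb E$. If $f(\mathbb D)\cap\mathcal T\neq\varnothing$, then $f(\mathbb D)\subset\mathcal T$.
   Context: $\mathbb D$ is the open unit disc. The tetrablock is $\mathbb E=\{(z_1,z_2,z_3)\in\mathbb C^3:\ |z_2-\bar z_1z_3|+|z_1z_2-z_3|+|z_1|^2<1\}$, and $\mathcal T=\{z\in\mathbb C^3: z_1z_2=z_3\}$. *)

theory Defs
  imports "HOL-Complex_Analysis.Complex_Analysis"
begin

definition tetrablock :: "(complex \<times> complex \<times> complex) set" where
  "tetrablock = {(z1, z2, z3). cmod (z2 - cnj z1 * z3) + cmod (z1 * z2 - z3) + (cmod z1)^2 < 1}"

definition royal_T :: "(complex \<times> complex \<times> complex) set" where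
  "royal_T = {(z1, z2, z3). z1 * z2 = z3}"

end

theory Submission
  imports Defs
begin

text \<open>
  Write \<open>G(z) = |z\<^sub>2 - z\<^sub>1\<^sup>* z\<^sub>3| + |z\<^sub>1z\<^sub>2 - z\<^sub>3| + |z\<^sub>1|\<^sup>2\<close>, so that the tetrablock is \<open>{G < 1}\<close>
  and its boundary lies in \<open>{G \<le> 1, |z\<^sub>1| \<le> 1, |z\<^sub>2| \<le> 1}\<close>.  A point \<open>(a, b, ab)\<close> of \<open>\<T>\<close>
  with \<open>|a|, |b| < 1\<close> lies in the open tetrablock, so at a boundary point of \<open>\<T>\<close> one of
  \<open>|f\<^sub>1|, |f\<^sub>2|\<close> equals 1; by the maximum modulus principle it is then identically 1.
  Finally \<open>G \<le> 1\<close> together with \<open>|z\<^sub>1| = 1\<close> or \<open>|z\<^sub>2| = 1\<close> forces \<open>z\<^sub>1z\<^sub>2 = z\<^sub>3\<close>.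
\<close>

definition tetrablock_gauge :: "complex \<times> complex \<times> complex \<Rightarrow> real" where
  "tetrablock_gauge p =
     cmod (fst (snd p) - cnj (fst p) * snd (snd p)) + cmod (fst p * fst (snd p) - snd (snd p))
     + (cmod (fst p))\<^sup>2"

lemma tetrablock_gauge_simp [simp]:
  "tetrablock_gauge (z1, z2, z3) = cmod (z2 - cnj z1 * z3) + cmod (z1 * z2 - z3) + (cmod z1)\<^sup>2"
  by (simp add: tetrablock_gauge_def)

lemma tetrablock_eq_gauge_less_1: "tetrablock = {p. tetrablock_gauge p < 1}"
  unfolding tetrablock_def by auto

lemma continuous_on_tetrablock_gauge: "continuous_on UNIV tetrablock_gauge"
  unfolding tetrablock_gauge_def by (intro continuous_intros)

lemma open_tetrablock: "open tetrablock"
  unfolding tetrablock_eq_gauge_less_1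
  by (rule open_Collect_less[OF continuous_on_tetrablock_gauge continuous_on_const])

lemma norm_fst_le_1_if_gauge_le_1:
  assumes "tetrablock_gauge (z1, z2, z3) \<le> 1"
  shows "cmod z1 \<le> 1"
proof -
  have "(cmod z1)\<^sup>2 \<le> 1"
    using assms norm_ge_zero[of "z2 - cnj z1 * z3"] norm_ge_zero[of "z1 * z2 - z3"]
    unfolding tetrablock_gauge_simp by linarith
  then show ?thesis by (simp add: abs_square_le_1)
qed

lemma norm_mult_one_minus_norm_square_le:
  fixes z1 z2 z3 :: complex
  shows "cmod z2 * (1 - (cmod z1)\<^sup>2) \<le> cmod (z2 - cnj z1 * z3) + cmod z1 * cmod (z1 * z2 - z3)"
proof -
  have split: "z2 * of_real (1 - (cmod z1)\<^sup>2) = (z2 - cnj z1 * z3) - cnj z1 * (z1 * z2 - z3)"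
    unfolding of_real_diff complex_norm_square by (simp add: algebra_simps)
  have "cmod z2 * (1 - (cmod z1)\<^sup>2) \<le> cmod z2 * \<bar>1 - (cmod z1)\<^sup>2\<bar>"
    by (simp add: mult_left_mono)
  also have "\<dots> = cmod (z2 * of_real (1 - (cmod z1)\<^sup>2))"
    by (simp only: norm_mult norm_of_real)
  also have "\<dots> \<le> cmod (z2 - cnj z1 * z3) + cmod (cnj z1 * (z1 * z2 - z3))"
    unfolding split by (rule norm_triangle_ineq4)
  finally show ?thesis by (simp add: norm_mult)
qed

lemma tetrablock_norm_snd_less_1:
  assumes "(z1, z2, z3) \<in> tetrablock"
  shows "cmod z2 < 1"
proof -
  have G: "cmod (z2 - cnj z1 * z3) + cmod (z1 * z2 - z3) + (cmod z1)\<^sup>2 < 1"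
    using assms by (simp add: tetrablock_def)
  then have "cmod z1 \<le> 1"
    using norm_fst_le_1_if_gauge_le_1[of z1 z2 z3] by simp
  then have "cmod z1 * cmod (z1 * z2 - z3) \<le> cmod (z1 * z2 - z3)"
    by (simp add: mult_left_le_one_le)
  then have "cmod z2 * (1 - (cmod z1)\<^sup>2) < 1 - (cmod z1)\<^sup>2"
    using norm_mult_one_minus_norm_square_le[of z2 z1 z3] G by linarith
  moreover have "0 < 1 - (cmod z1)\<^sup>2"
    using G norm_ge_zero[of "z2 - cnj z1 * z3"] norm_ge_zero[of "z1 * z2 - z3"] by linarith
  ultimately show ?thesis
    using mult_less_cancel_right_pos[of "1 - (cmod z1)\<^sup>2" "cmod z2" 1] by simp
qed

lemma closure_tetrablock_subset:
  "closure tetrablock \<subseteq> {p. tetrablock_gauge p \<le> 1 \<and> cmod (fst (snd p)) \<le> 1}"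
proof (rule closure_minimal)
  show "tetrablock \<subseteq> {p. tetrablock_gauge p \<le> 1 \<and> cmod (fst (snd p)) \<le> 1}"
  proof (clarify)
    fix z1 z2 z3
    assume "(z1, z2, z3) \<in> tetrablock"
    then show "tetrablock_gauge (z1, z2, z3) \<le> 1 \<and> cmod (fst (snd (z1, z2, z3))) \<le> 1"
      using tetrablock_norm_snd_less_1 unfolding tetrablock_eq_gauge_less_1 by fastforce
  qed
  have "closed ({p. tetrablock_gauge p \<le> 1} \<inter> {p. cmod (fst (snd p)) \<le> 1})"
    by (intro closed_Int closed_Collect_le continuous_on_tetrablock_gauge continuous_intros)
  then show "closed {p. tetrablock_gauge p \<le> 1 \<and> cmod (fst (snd p)) \<le> 1}"
    by (simp add: Collect_conj_eq)
qed

lemma frontier_tetrablockD: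
  assumes "(z1, z2, z3) \<in> frontier tetrablock"
  shows "tetrablock_gauge (z1, z2, z3) \<le> 1" "cmod z1 \<le> 1" "cmod z2 \<le> 1"
    and "(z1, z2, z3) \<notin> tetrablock"
proof -
  have "(z1, z2, z3) \<in> closure tetrablock"
    using assms by (simp add: frontier_def)
  with closure_tetrablock_subset show G: "tetrablock_gauge (z1, z2, z3) \<le> 1" and "cmod z2 \<le> 1"
    by auto
  from G show "cmod z1 \<le> 1" by (rule norm_fst_le_1_if_gauge_le_1)
  show "(z1, z2, z3) \<notin> tetrablock"
    using assms open_tetrablock by (simp add: frontier_def interior_open)
qed

lemma royal_T_in_tetrablock:
  assumes "cmod a < 1" "cmod b < 1"
  shows "(a, b, a * b) \<in> tetrablock"
proof -
  have a2: "0 < 1 - (cmod a)\<^sup>2"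
    using assms(1) by (simp add: power_less_one_iff)
  have "b - cnj a * (a * b) = b * of_real (1 - (cmod a)\<^sup>2)"
    unfolding of_real_diff complex_norm_square by (simp add: algebra_simps)
  then have "cmod (b - cnj a * (a * b)) = cmod b * (1 - (cmod a)\<^sup>2)"
    by (simp only: norm_mult norm_of_real abs_of_pos[OF a2])
  moreover have "cmod b * (1 - (cmod a)\<^sup>2) < 1 - (cmod a)\<^sup>2"
    using mult_strict_right_mono[OF assms(2) a2] by simp
  ultimately show ?thesis by (simp add: tetrablock_def)
qed

lemma frontier_tetrablock_royal_T_norm_eq_1:
  assumes "(z1, z2, z3) \<in> frontier tetrablock" "(z1, z2, z3) \<in> royal_T"
  shows "cmod z1 = 1 \<or> cmod z2 = 1"
proof (rule ccontr)
  assume "\<not> ?thesis"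
  with frontier_tetrablockD(2,3)[OF assms(1)] have "cmod z1 < 1" "cmod z2 < 1"
    by auto
  then have "(z1, z2, z1 * z2) \<in> tetrablock"
    by (rule royal_T_in_tetrablock)
  with assms frontier_tetrablockD(4) show False
    by (auto simp: royal_T_def)
qed

lemma royal_T_if_gauge_le_1_norm_fst_eq_1:
  assumes "tetrablock_gauge (z1, z2, z3) \<le> 1" "cmod z1 = 1"
  shows "(z1, z2, z3) \<in> royal_T"
proof -
  have "cmod (z2 - cnj z1 * z3) + cmod (z1 * z2 - z3) \<le> 0"
    using assms by simp
  then have "cmod (z1 * z2 - z3) \<le> 0"
    using norm_ge_zero[of "z2 - cnj z1 * z3"] by linarith
  then show ?thesis by (simp add: royal_T_def)
qed

lemma royal_T_if_gauge_le_1_norm_snd_eq_1: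
  assumes G: "tetrablock_gauge (z1, z2, z3) \<le> 1" and z2: "cmod z2 = 1"
  shows "(z1, z2, z3) \<in> royal_T"
proof (cases "cmod z1 = 1")
  case True
  with G show ?thesis by (rule royal_T_if_gauge_le_1_norm_fst_eq_1)
next
  case False
  with norm_fst_le_1_if_gauge_le_1[OF G] have "0 < 1 - cmod z1" by simp
  moreover have "cmod (z1 * z2 - z3) * (1 - cmod z1) \<le> 0"
    using G norm_mult_one_minus_norm_square_le[of z2 z1 z3] z2 by (simp add: algebra_simps)
  ultimately have "cmod (z1 * z2 - z3) \<le> 0"
    by (simp add: mult_le_0_iff)
  then show ?thesis by (simp add: royal_T_def)
qed

lemma holomorphic_norm_eq_1_if_attained:
  fixes g :: "complex \<Rightarrow> complex"
  assumes "g holomorphic_on S" "open S" "connected S"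
    and "\<And>w. w \<in> S \<Longrightarrow> cmod (g w) \<le> 1" "z0 \<in> S" "cmod (g z0) = 1" "z \<in> S"
  shows "cmod (g z) = 1"
proof -
  have "g constant_on S"
    by (rule maximum_modulus_principle[OF assms(1-3,2) order_refl assms(5)])
       (use assms(4-6) in auto)
  then show ?thesis
    using assms(5-7) by (metis constant_on_def)
qed

theorem lemma4:
  fixes f1 f2 f3 :: "complex \<Rightarrow> complex"
  assumes "f1 holomorphic_on ball 0 1"
    and "f2 holomorphic_on ball 0 1"
    and "f3 holomorphic_on ball 0 1"
    and "\<forall>z\<in>ball 0 1. (f1 z, f2 z, f3 z) \<in> frontier tetrablock"
    and "\<exists>z\<in>ball 0 1. (f1 z, f2 z, f3 z) \<in> royal_T"
  shows "\<forall>z\<in>ball 0 1. (f1 z, f2 z, f3 z) \<in> royal_T"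
proof
  fix z :: complex
  assume z: "z \<in> ball 0 1"
  note boundary = frontier_tetrablockD[OF assms(4)[rule_format]]
  obtain z0 where z0: "z0 \<in> ball 0 1" "(f1 z0, f2 z0, f3 z0) \<in> royal_T"
    using assms(5) by blast
  have "cmod (f1 z0) = 1 \<or> cmod (f2 z0) = 1"
    by (rule frontier_tetrablock_royal_T_norm_eq_1[OF assms(4)[rule_format, OF z0(1)] z0(2)])
  then show "(f1 z, f2 z, f3 z) \<in> royal_T"
  proof
    assume "cmod (f1 z0) = 1"
    then have "cmod (f1 z) = 1"
      using holomorphic_norm_eq_1_if_attained[OF assms(1) open_ball connected_ball]
        boundary(2) z0(1) z by metis
    with boundary(1)[OF z] show ?thesis
      by (rule royal_T_if_gauge_le_1_norm_fst_eq_1)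
  next
    assume "cmod (f2 z0) = 1"
    then have "cmod (f2 z) = 1"
      using holomorphic_norm_eq_1_if_attained[OF assms(2) open_ball connected_ball]
        boundary(3) z0(1) z by metis
    with boundary(1)[OF z] show ?thesis
      by (rule royal_T_if_gauge_le_1_norm_snd_eq_1)
  qed
qed

end
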